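(* Let $(L,\le,\bot,\top)$ be a complete lattice and $(\&_i,\swarrow^i,\nwarrow_i)$, $i=1,\dots,n$, adjoint triples on $L$ with $x\,\&_i\,\top=\top\,\&_i\,x=x$ for all $x\in L$ and all $i$. Let $(A,B,R,\sigma)$ be a normalized context with concept lattice $\mathcal{M}$, let $\{K_\mu\}_{\mu\in\Lambda}$ be a decomposition of $\mathcal{M}$ into independent blocks, and let $A_\mu,B_\mu$ ($\mu\in\Lambda$) be the associated sets defined below. If $a\in A$, $b\in B$ and $R(a,b)\neq\bot$, then there exists $\mu\in\Lambda$ such that $a\in A_\mu$ and $b\in B_\mu$.
   Context: An adjoint triple on $L$ is a triple of maps $\&,\swarrow,\nwarrow\colon L\times L\to L$ with $x\le z\swarrow y\iff x\& y\le z\iff y\le z\nwarrow x$. A context is $(A,B,R,\sigma)$ with $A,B$ non-empty, $R\colon A\times B\to L$, $\sigma\colon A\times B\to\{1,\dots,n\}$; normalized means every $a\in A$ has $b_1,b_2$ with $R(a,b_1)\ne\bot$, $R(a,b_2)=\bot$, and every $b\in B$ has $a_1,a_2$ with $R(a_1,b)\ne\bot$, $R(a_2,b)=\bot$. For $g\colon B\to L$, $f\colon A\to L$: $g^\uparrow(a)=\inf_{b}R(a,b)\swarrow^{\sigma(a,b)}g(b)$, $f^\downarrow(b)=\inf_{a}R(a,b)\nwarrow_{\sigma(a,b)}f(a)$. $\mathcal{M}$ is the complete lattice of pairs $\langle g,f\rangle$ with $g^\uparrow=f$, $f^\downarrow=g$, ordered by $g_1\le g_2$ pointwise; top $\langle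 g_\top,f_\bot\rangle$, bottom $\langle g_\bot,f_\top\rangle$ ($g_\top,g_\bot,f_\top,f_\bot$ constant maps). $\phi_{a,x}\colon A\to L$ takes value $x$ at $a$ and $\bot$ elsewhere; $\phi_{b,y}\colon B\to L$ takes value $y$ at $b$ and $\bot$ elsewhere. For a bounded lattice $(M,\preceq,\bot,\top)$, a block is a sublattice $K\subsetneq M$ with $K\setminus\{\bot,\top\}\ne\varnothing$ and $(\{x\mid k\preceq x\}\cup\{x\mid x\preceq k\})\setminus\{\bot,\top\}\subseteq K$ for all $k\in K\setminus\{\bot,\top\}$; blocks $K_1,K_2$ are independent if $K_1\cap K_2\subseteq\{\bot,\top\}$; a decomposition into independent blocks is a family of pairwise independent blocks whose union is $M$. With $K_\mu^*=K_\mu\setminus\{\langle g_\top,f_\bot\rangle,\langle g_\bot,f_\top\rangle\}$: $A_\mu=\{a\in A\mid\langle\phi_{a,x}^\downarrow,\phi_{a,x}^{\downarrow\uparrow}\rangle\in K_\mu^*\text{ for some }x\in L\}$ and $B_\mu=\{b\in B\mid\langle\phi_{b,y}^{\uparrow\downarrow},\phi_{b,y}^{\uparrow}\rangle\in K_\mu^*\text{ for some }y\in L\}$. *)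

theory Defs
  imports Main
begin

definition adjoint_triple ::
  "('l::order \<Rightarrow> 'l \<Rightarrow> 'l) \<Rightarrow> ('l \<Rightarrow> 'l \<Rightarrow> 'l) \<Rightarrow> ('l \<Rightarrow> 'l \<Rightarrow> 'l) \<Rightarrow> bool" where
  "adjoint_triple amp sw nw \<longleftrightarrow>
     (\<forall>x y z. (x \<le> sw z y \<longleftrightarrow> amp x y \<le> z) \<and> (amp x y \<le> z \<longleftrightarrow> y \<le> nw z x))"

definition normalized_context ::
  "nat \<Rightarrow> 'a set \<Rightarrow> 'b set \<Rightarrow> ('a \<Rightarrow> 'b \<Rightarrow> 'l::complete_lattice) \<Rightarrow> ('a \<Rightarrow> 'b \<Rightarrow> nat) \<Rightarrow> bool" where
  "normalized_context n A B R \<sigma> \<longleftrightarrow>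
     A \<noteq> {} \<and> B \<noteq> {} \<and>
     (\<forall>a\<in>A. \<forall>b\<in>B. \<sigma> a b \<in> {1..n}) \<and>
     (\<forall>a\<in>A. (\<exists>b1\<in>B. R a b1 \<noteq> bot) \<and> (\<exists>b2\<in>B. R a b2 = bot)) \<and>
     (\<forall>b\<in>B. (\<exists>a1\<in>A. R a1 b \<noteq> bot) \<and> (\<exists>a2\<in>A. R a2 b = bot))"

text \<open>Maps B \<rightarrow> L and A \<rightarrow> L are represented as total
  functions; the operators return bot outside the carrier, so that all
  results are extensional (and equality of concepts is equality on the carriers).\<close>
definition up_op ::
  "(nat \<Rightarrow> 'l::complete_lattice \<Rightarrow> 'l \<Rightarrow> 'l) \<Rightarrow> 'a set \<Rightarrow> 'b set \<Rightarrow> ('a \<Rightarrow> 'b \<Rightarrow> 'l)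
     \<Rightarrow> ('a \<Rightarrow> 'b \<Rightarrow> nat) \<Rightarrow> ('b \<Rightarrow> 'l) \<Rightarrow> ('a \<Rightarrow> 'l)" where
  "up_op sw A B R \<sigma> g = (\<lambda>a. if a \<in> A then (INF b\<in>B. sw (\<sigma> a b) (R a b) (g b)) else bot)"

definition down_op ::
  "(nat \<Rightarrow> 'l::complete_lattice \<Rightarrow> 'l \<Rightarrow> 'l) \<Rightarrow> 'a set \<Rightarrow> 'b set \<Rightarrow> ('a \<Rightarrow> 'b \<Rightarrow> 'l)
     \<Rightarrow> ('a \<Rightarrow> 'b \<Rightarrow> nat) \<Rightarrow> ('a \<Rightarrow> 'l) \<Rightarrow> ('b \<Rightarrow> 'l)" where
  "down_op nw A B R \<sigma> f = (\<lambda>b. if b \<in> B then (INF a\<in>A. nw (\<sigma> a b) (R a b) (f a)) else bot)"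

definition concepts where
  "concepts sw nw A B R \<sigma> =
     {(g, f). up_op sw A B R \<sigma> g = f \<and> down_op nw A B R \<sigma> f = g}"

definition concept_le :: "'b set \<Rightarrow> ('b \<Rightarrow> 'l::order) \<times> ('a \<Rightarrow> 'l) \<Rightarrow> ('b \<Rightarrow> 'l) \<times> ('a \<Rightarrow> 'l) \<Rightarrow> bool" where
  "concept_le B c1 c2 \<longleftrightarrow> (\<forall>b\<in>B. fst c1 b \<le> fst c2 b)"

definition top_concept :: "'a set \<Rightarrow> 'b set \<Rightarrow> ('b \<Rightarrow> 'l::complete_lattice) \<times> ('a \<Rightarrow> 'l)" where
  "top_concept A B = ((\<lambda>b. if b \<in> B then top else bot), (\<lambda>a. bot))"

definition bot_concept :: "'a set \<Rightarrow> 'b set \<Rightarrow> ('b \<Rightarrow> 'l::complete_lattice) \<times> ('a \<Rightarrow> 'l)" where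
  "bot_concept A B = ((\<lambda>b. bot), (\<lambda>a. if a \<in> A then top else bot))"

definition is_join :: "'c set \<Rightarrow> ('c \<Rightarrow> 'c \<Rightarrow> bool) \<Rightarrow> 'c \<Rightarrow> 'c \<Rightarrow> 'c \<Rightarrow> bool" where
  "is_join M le x y z \<longleftrightarrow> z \<in> M \<and> le x z \<and> le y z \<and> (\<forall>w\<in>M. le x w \<and> le y w \<longrightarrow> le z w)"

definition is_meet :: "'c set \<Rightarrow> ('c \<Rightarrow> 'c \<Rightarrow> bool) \<Rightarrow> 'c \<Rightarrow> 'c \<Rightarrow> 'c \<Rightarrow> bool" where
  "is_meet M le x y z \<longleftrightarrow> z \<in> M \<and> le z x \<and> le z y \<and> (\<forall>w\<in>M. le w x \<and> le w y \<longrightarrow> le w z)"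

definition sublattice :: "'c set \<Rightarrow> ('c \<Rightarrow> 'c \<Rightarrow> bool) \<Rightarrow> 'c set \<Rightarrow> bool" where
  "sublattice M le K \<longleftrightarrow> K \<subseteq> M \<and>
     (\<forall>x\<in>K. \<forall>y\<in>K. \<forall>z. (is_join M le x y z \<longrightarrow> z \<in> K) \<and> (is_meet M le x y z \<longrightarrow> z \<in> K))"

definition is_block :: "'c set \<Rightarrow> ('c \<Rightarrow> 'c \<Rightarrow> bool) \<Rightarrow> 'c \<Rightarrow> 'c \<Rightarrow> 'c set \<Rightarrow> bool" where
  "is_block M le bt tp K \<longleftrightarrow>
     sublattice M le K \<and> K \<subset> M \<and> K - {bt, tp} \<noteq> {} \<and>
     (\<forall>k \<in> K - {bt, tp}. ({x\<in>M. le k x} \<union> {x\<in>M. le x k}) - {bt, tp} \<subseteq> K)"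

definition independent_blocks :: "'c \<Rightarrow> 'c \<Rightarrow> 'c set \<Rightarrow> 'c set \<Rightarrow> bool" where
  "independent_blocks bt tp K1 K2 \<longleftrightarrow> K1 \<inter> K2 \<subseteq> {bt, tp}"

definition block_decomposition ::
  "'c set \<Rightarrow> ('c \<Rightarrow> 'c \<Rightarrow> bool) \<Rightarrow> 'c \<Rightarrow> 'c \<Rightarrow> 'i set \<Rightarrow> ('i \<Rightarrow> 'c set) \<Rightarrow> bool" where
  "block_decomposition M le bt tp \<Lambda> K \<longleftrightarrow>
     (\<forall>\<mu>\<in>\<Lambda>. is_block M le bt tp (K \<mu>)) \<and>
     (\<forall>\<mu>\<in>\<Lambda>. \<forall>\<nu>\<in>\<Lambda>. \<mu> \<noteq> \<nu> \<longrightarrow> independent_blocks bt tp (K \<mu>) (K \<nu>)) \<and>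
     (\<Union>\<mu>\<in>\<Lambda>. K \<mu>) = M"

definition phi :: "'x \<Rightarrow> 'l::complete_lattice \<Rightarrow> 'x \<Rightarrow> 'l" where
  "phi u v = (\<lambda>u'. if u' = u then v else bot)"

definition A_block where
  "A_block sw nw A B R \<sigma> Kmu =
     {a\<in>A. \<exists>x. (down_op nw A B R \<sigma> (phi a x), up_op sw A B R \<sigma> (down_op nw A B R \<sigma> (phi a x)))
               \<in> Kmu - {top_concept A B, bot_concept A B}}"

definition B_block where
  "B_block sw nw A B R \<sigma> Kmu =
     {b\<in>B. \<exists>y. (down_op nw A B R \<sigma> (up_op sw A B R \<sigma> (phi b y)), up_op sw A B R \<sigma> (phi b y))
               \<in> Kmu - {top_concept A B, bot_concept A B}}"

end

theory Submission
  imports Defs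
begin

text \<open>The object concept of a, generated by phi a top, has extent R(a,-); the attribute
  concept generated by phi b (R(a,b)) has intent top at a, so its extent lies below R(a,-).
  The two concepts are therefore comparable, R(a,b) \<noteq> bot and normalization make both of them
  non-trivial, and a block containing a non-trivial element contains every non-trivial element
  comparable to it.\<close>

lemma adjoint_triple_bot_left:
  fixes x :: "'l::{order_bot, order_top}"
  assumes "adjoint_triple amp sw nw"
  shows "amp bot x = bot"
  using assms unfolding adjoint_triple_def by (metis bot.extremum bot.extremum_unique)

lemma adjoint_triple_bot_right:
  fixes x :: "'l::{order_bot, order_top}"
  assumes "adjoint_triple amp sw nw"
  shows "amp x bot = bot"
  using assms unfolding adjoint_triple_def by (metis bot.extremum bot.extremum_unique)

lemma adjoint_triple_sw_bot:
  fixes z :: "'l::{order_bot, order_top}"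
  assumes "adjoint_triple amp sw nw"
  shows "sw z bot = top"
  using assms adjoint_triple_bot_right[OF assms] unfolding adjoint_triple_def
  by (metis bot.extremum top.extremum_unique)

lemma adjoint_triple_nw_bot:
  fixes z :: "'l::{order_bot, order_top}"
  assumes "adjoint_triple amp sw nw"
  shows "nw z bot = top"
  using assms adjoint_triple_bot_left[OF assms] unfolding adjoint_triple_def
  by (metis bot.extremum top.extremum_unique)

lemma adjoint_triple_sw_self:
  fixes z :: "'l::{order_bot, order_top}"
  assumes "adjoint_triple amp sw nw" and "amp top z = z"
  shows "sw z z = top"
  using assms unfolding adjoint_triple_def by (metis order.refl top.extremum_unique)

lemma adjoint_triple_nw_top:
  fixes z :: "'l::{order_bot, order_top}"
  assumes "adjoint_triple amp sw nw" and "\<And>y. amp top y = y"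
  shows "nw z top = z"
  using assms unfolding adjoint_triple_def by (metis order.antisym order.refl)

lemma top_ne_bot_if_ne_bot:
  fixes x :: "'l::{order_bot, order_top}"
  shows "x \<noteq> bot \<Longrightarrow> top \<noteq> (bot::'l)"
  by (metis bot.extremum_uniqueI top.extremum)

lemma block_decomposition_comparable_in_same_block:
  assumes dec: "block_decomposition M le bt tp \<Lambda> K"
    and "x \<in> M" "y \<in> M" "x \<notin> {bt, tp}" "y \<notin> {bt, tp}" "le y x"
  shows "\<exists>\<mu>\<in>\<Lambda>. x \<in> K \<mu> \<and> y \<in> K \<mu>"
proof -
  obtain \<mu> where "\<mu> \<in> \<Lambda>" "x \<in> K \<mu>"
    using dec \<open>x \<in> M\<close> unfolding block_decomposition_def by blast
  moreover have "is_block M le bt tp (K \<mu>)"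
    using dec \<open>\<mu> \<in> \<Lambda>\<close> unfolding block_decomposition_def by blast
  ultimately show ?thesis
    using assms(3-6) unfolding is_block_def by blast
qed

locale adjoint_context =
  fixes amp sw nw :: "nat \<Rightarrow> 'l::complete_lattice \<Rightarrow> 'l \<Rightarrow> 'l"
    and A :: "'a set" and B :: "'b set"
    and R :: "'a \<Rightarrow> 'b \<Rightarrow> 'l" and \<sigma> :: "'a \<Rightarrow> 'b \<Rightarrow> nat"
  assumes adjoint: "a \<in> A \<Longrightarrow> b \<in> B \<Longrightarrow> adjoint_triple (amp (\<sigma> a b)) (sw (\<sigma> a b)) (nw (\<sigma> a b))"
begin

abbreviation up :: "('b \<Rightarrow> 'l) \<Rightarrow> 'a \<Rightarrow> 'l" where
  "up \<equiv> up_op sw A B R \<sigma>"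

abbreviation down :: "('a \<Rightarrow> 'l) \<Rightarrow> 'b \<Rightarrow> 'l" where
  "down \<equiv> down_op nw A B R \<sigma>"

lemma galois: "(\<forall>a\<in>A. f a \<le> up g a) \<longleftrightarrow> (\<forall>b\<in>B. g b \<le> down f b)"
proof -
  have "x \<le> sw (\<sigma> a b) (R a b) y \<longleftrightarrow> y \<le> nw (\<sigma> a b) (R a b) x"
    if "a \<in> A" "b \<in> B" for a b x y
    using adjoint[OF that] unfolding adjoint_triple_def by blast
  then show ?thesis
    unfolding up_op_def down_op_def by (auto simp: le_INF_iff)
qed

lemma le_down_up: "b \<in> B \<Longrightarrow> g b \<le> down (up g) b"
  using galois[of "up g" g] by blast

lemma le_up_down: "a \<in> A \<Longrightarrow> f a \<le> up (down f) a"
  using galois[of f "down f"] by blast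

lemma up_antimono: "\<forall>b\<in>B. g b \<le> g' b \<Longrightarrow> a \<in> A \<Longrightarrow> up g' a \<le> up g a"
  using galois[of "up g'" g] le_down_up[of _ g'] order_trans by blast

lemma down_antimono: "\<forall>a\<in>A. f a \<le> f' a \<Longrightarrow> b \<in> B \<Longrightarrow> down f' b \<le> down f b"
  using galois[of f "down f'"] le_up_down[of _ f'] order_trans by blast

lemma up_down_up: "up (down (up g)) = up g"
proof
  fix a
  show "up (down (up g)) a = up g a"
  proof (cases "a \<in> A")
    case True
    then show ?thesis
      using up_antimono[of g "down (up g)"] le_down_up le_up_down[of a "up g"]
      by (blast intro: order.antisym)
  qed (simp add: up_op_def)
qed

lemma down_up_down: "down (up (down f)) = down f"
proof
  fix b
  show "down (up (down f)) b = down f b"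
  proof (cases "b \<in> B")
    case True
    then show ?thesis
      using down_antimono[of f "up (down f)"] le_up_down le_down_up[of b "down f"]
      by (blast intro: order.antisym)
  qed (simp add: down_op_def)
qed

definition object_concept :: "'a \<Rightarrow> ('b \<Rightarrow> 'l) \<times> ('a \<Rightarrow> 'l)" where
  "object_concept a = (down (phi a top), up (down (phi a top)))"

definition attribute_concept :: "'b \<Rightarrow> 'l \<Rightarrow> ('b \<Rightarrow> 'l) \<times> ('a \<Rightarrow> 'l)" where
  "attribute_concept b y = (down (up (phi b y)), up (phi b y))"

lemma object_concept_in_concepts: "object_concept a \<in> concepts sw nw A B R \<sigma>"
  unfolding concepts_def object_concept_def by (simp add: down_up_down)

lemma attribute_concept_in_concepts: "attribute_concept b y \<in> concepts sw nw A B R \<sigma>"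
  unfolding concepts_def attribute_concept_def by (simp add: up_down_up)

end

locale unital_adjoint_context = adjoint_context +
  assumes amp_top_left: "a \<in> A \<Longrightarrow> b \<in> B \<Longrightarrow> amp (\<sigma> a b) top y = y"
begin

lemma nw_top: "a \<in> A \<Longrightarrow> b \<in> B \<Longrightarrow> nw (\<sigma> a b) z top = z"
  using adjoint_triple_nw_top adjoint amp_top_left by blast

lemma down_phi_top: "a \<in> A \<Longrightarrow> b \<in> B \<Longrightarrow> down (phi a top) b = R a b"
  unfolding down_op_def phi_def
  by (auto simp: nw_top adjoint_triple_nw_bot[OF adjoint] intro!: order.antisym INF_greatest INF_lower2)

lemma up_phi_self: "a \<in> A \<Longrightarrow> b \<in> B \<Longrightarrow> up (phi b (R a b)) a = top"
  unfolding up_op_def phi_def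
  by (auto simp: adjoint_triple_sw_self[OF adjoint amp_top_left] adjoint_triple_sw_bot[OF adjoint]
      intro!: top_unique[THEN iffD1] INF_greatest)

lemma down_le_if_top: "a \<in> A \<Longrightarrow> b \<in> B \<Longrightarrow> f a = top \<Longrightarrow> down f b \<le> R a b"
  unfolding down_op_def by (auto simp: nw_top intro: INF_lower2)

lemma object_concept_nontrivial:
  assumes "a \<in> A" "b \<in> B" "R a b \<noteq> bot" "b' \<in> B" "R a b' = bot"
  shows "object_concept a \<notin> {bot_concept A B, top_concept A B}"
proof -
  have "fst (object_concept a) b \<noteq> fst (bot_concept A B) b"
    using down_phi_top assms(1-3) by (simp add: object_concept_def bot_concept_def)
  moreover have "fst (object_concept a) b' \<noteq> fst (top_concept A B) b'"
    using down_phi_top assms top_ne_bot_if_ne_bot[OF assms(3), THEN not_sym]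
    by (simp add: object_concept_def top_concept_def)
  ultimately show ?thesis by auto
qed

lemma attribute_concept_nontrivial:
  assumes "a \<in> A" "b \<in> B" "R a b \<noteq> bot"
  shows "attribute_concept b (R a b) \<notin> {bot_concept A B, top_concept A B}"
proof -
  have "R a b \<le> fst (attribute_concept b (R a b)) b"
    using le_down_up[OF assms(2), of "phi b (R a b)"] by (simp add: attribute_concept_def phi_def)
  then have "fst (attribute_concept b (R a b)) b \<noteq> fst (bot_concept A B) b"
    using assms(3) bot.extremum_uniqueI by (fastforce simp: bot_concept_def)
  moreover have "snd (attribute_concept b (R a b)) a \<noteq> snd (top_concept A B) a"
    using up_phi_self[OF assms(1,2)] top_ne_bot_if_ne_bot[OF assms(3)]
    by (auto simp: attribute_concept_def top_concept_def)
  ultimately show ?thesis by auto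
qed

lemma attribute_concept_le_object_concept:
  assumes "a \<in> A" "b \<in> B"
  shows "concept_le B (attribute_concept b (R a b)) (object_concept a)"
  using down_le_if_top[of a _ "up (phi b (R a b))", OF assms(1) _ up_phi_self[OF assms]]
    down_phi_top[OF assms(1)]
  unfolding concept_le_def attribute_concept_def object_concept_def by simp

end

theorem lemma34:
  fixes amp sw nw :: "nat \<Rightarrow> 'l::complete_lattice \<Rightarrow> 'l \<Rightarrow> 'l"
    and n :: nat
    and A :: "'a set" and B :: "'b set"
    and R :: "'a \<Rightarrow> 'b \<Rightarrow> 'l" and \<sigma> :: "'a \<Rightarrow> 'b \<Rightarrow> nat"
    and \<Lambda> :: "'i set" and K :: "'i \<Rightarrow> (('b \<Rightarrow> 'l) \<times> ('a \<Rightarrow> 'l)) set"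
    and a :: 'a and b :: 'b
  assumes adj: "\<forall>i\<in>{1..n}. adjoint_triple (amp i) (sw i) (nw i)"
    and unit: "\<forall>i\<in>{1..n}. \<forall>x. amp i x top = x \<and> amp i top x = x"
    and ctx: "normalized_context n A B R \<sigma>"
    and dec: "block_decomposition (concepts sw nw A B R \<sigma>) (concept_le B)
                (bot_concept A B) (top_concept A B) \<Lambda> K"
    and a: "a \<in> A" and b: "b \<in> B" and Rab: "R a b \<noteq> bot"
  shows "\<exists>\<mu>\<in>\<Lambda>. a \<in> A_block sw nw A B R \<sigma> (K \<mu>) \<and> b \<in> B_block sw nw A B R \<sigma> (K \<mu>)"
proof -
  interpret unital_adjoint_context amp sw nw A B R \<sigma>
    using adj unit ctx unfolding normalized_context_def by unfold_locales blast+
  obtain b' where "b' \<in> B" "R a b' = bot"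
    using ctx a unfolding normalized_context_def by blast
  then have "object_concept a \<notin> {bot_concept A B, top_concept A B}"
    using object_concept_nontrivial a b Rab by blast
  moreover have "attribute_concept b (R a b) \<notin> {bot_concept A B, top_concept A B}"
    using attribute_concept_nontrivial a b Rab by blast
  ultimately obtain \<mu>
    where "\<mu> \<in> \<Lambda>" "object_concept a \<in> K \<mu>" "attribute_concept b (R a b) \<in> K \<mu>"
    using block_decomposition_comparable_in_same_block[OF dec] object_concept_in_concepts
      attribute_concept_in_concepts attribute_concept_le_object_concept[OF a b] by blast
  then show ?thesis
    using a b \<open>object_concept a \<notin> _\<close> \<open>attribute_concept b (R a b) \<notin> _\<close>
    unfolding A_block_def B_block_def object_concept_def attribute_concept_def by blast
qed

end
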